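(* Let $X$ be a nonempty set, $f:X\to X$ a function, and $\tau_1$ the fuzzy topology on $X$ defined below. Then $f:(X,\tau_1)\to(X,\tau_1)$ is onto if and only if $f$ is an open map.
   Context: A fuzzy subset of $X$ is a function $\mu:X\to[0,1]$; union is the pointwise supremum, intersection the pointwise minimum; $\emptyset$ is the constant $0$ and $X$ the constant $1$. A fuzzy topology is a family of fuzzy subsets containing $\emptyset$ and $X$, closed under arbitrary unions and finite intersections; the topology generated by a base $\mathbb{B}$ consists of $\emptyset$ and all unions of subfamilies of $\mathbb{B}$. $\mathbb{N}=\{1,2,\dots\}$, $f^{n+1}=f^n\circ f$. Definition of $\tau_1$: for $n\in\mathbb{N}$ let $\mathcal{A}_n$ be the fuzzy subset with $\mu_{\mathcal{A}_n}(x)=1$ if there exists $m\in\mathbb{N}$ with $f^m(x)=x$, and $\mu_{\mathcal{A}_n}(x)=1/n$ otherwise; $\tau_1$ is generated by the base $\{\mathcal{A}_n:n\in\mathbb{N}\}$. The image of a fuzzy set $A$ is $\mu_{f(A)}(y)=\sup\{\mu_A(x): f(x)=y\}$, and $\mu_{f(A)}(y)=0$ if $y\notin f(X)$. $f$ is open if $f(U)$ is open for every open fuzzy set $U$. *)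

theory Defs
  imports Complex_Main
begin

text \<open>Fuzzy subsets of the ambient type are functions into the reals (values in [0,1]).\<close>
type_synonym 'a fuzzy = "'a \<Rightarrow> real"

definition fuzzy_empty :: "'a fuzzy" where
  "fuzzy_empty = (\<lambda>x. 0)"

definition fuzzy_whole :: "'a fuzzy" where
  "fuzzy_whole = (\<lambda>x. 1)"

definition fuzzy_Union :: "'a fuzzy set \<Rightarrow> 'a fuzzy" where
  "fuzzy_Union F = (\<lambda>x. if F = {} then 0 else Sup ((\<lambda>A. A x) ` F))"

definition generated_fuzzy_topology :: "'a fuzzy set \<Rightarrow> 'a fuzzy set" where
  "generated_fuzzy_topology B = insert fuzzy_empty {fuzzy_Union F | F. F \<subseteq> B}"

definition is_periodic :: "('a \<Rightarrow> 'a) \<Rightarrow> 'a \<Rightarrow> bool" where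
  "is_periodic f x \<longleftrightarrow> (\<exists>m::nat. m \<ge> 1 \<and> (f ^^ m) x = x)"

definition tau1_base_set :: "('a \<Rightarrow> 'a) \<Rightarrow> nat \<Rightarrow> 'a fuzzy" where
  "tau1_base_set f n = (\<lambda>x. if is_periodic f x then 1 else 1 / real n)"

definition tau1 :: "('a \<Rightarrow> 'a) \<Rightarrow> 'a fuzzy set" where
  "tau1 f = generated_fuzzy_topology {tau1_base_set f n | n. n \<ge> 1}"

definition fuzzy_image :: "('a \<Rightarrow> 'b) \<Rightarrow> 'a fuzzy \<Rightarrow> 'b fuzzy" where
  "fuzzy_image f A = (\<lambda>y. if y \<in> range f then Sup (A ` (f -` {y})) else 0)"

definition fuzzy_open_map :: "'a fuzzy set \<Rightarrow> 'b fuzzy set \<Rightarrow> ('a \<Rightarrow> 'b) \<Rightarrow> bool" where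
  "fuzzy_open_map T S f \<longleftrightarrow> (\<forall>U \<in> T. fuzzy_image f U \<in> S)"

end

theory Submission
  imports Defs
begin

text \<open>Every nonempty open set of \<open>\<tau>\<^sub>1\<close> is a step function: \<open>1\<close> on the periodic points
  and a constant \<open>b \<in> (0, 1]\<close> elsewhere. A surjection maps periodic points onto periodic points
  (a period of length \<open>m\<close> through \<open>y\<close> contains a periodic preimage of \<open>y\<close>), and non-periodic
  points have only non-periodic preimages; so the image of every open set is the set itself.
  Conversely, the image of the whole space is the indicator of the range of \<open>f\<close>; if it is open
  it is nonempty, hence positive everywhere, so \<open>f\<close> is onto.\<close>

definition periodic_step :: "('a \<Rightarrow> 'a) \<Rightarrow> real \<Rightarrow> 'a fuzzy" where
  "periodic_step f b = (\<lambda>x. if is_periodic f x then 1 else b)"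

lemma is_periodic_apply: "is_periodic f x \<Longrightarrow> is_periodic f (f x)"
  unfolding is_periodic_def by (metis funpow_swap1)

lemma is_periodic_has_periodic_preimage:
  assumes "is_periodic f y"
  obtains z where "is_periodic f z" "f z = y"
proof -
  obtain m where "m \<ge> 1" "(f ^^ m) y = y"
    using assms unfolding is_periodic_def by blast
  then obtain k where k: "(f ^^ Suc k) y = y"
    by (cases m) auto
  define z where "z = (f ^^ k) y"
  have "f z = y"
    using k unfolding z_def by (metis funpow_Suc_right funpow_swap1 comp_apply)
  moreover have "(f ^^ Suc k) z = z"
    unfolding z_def by (metis k funpow_add add.commute comp_apply)
  then have "is_periodic f z"
    unfolding is_periodic_def by (intro exI[of _ "Suc k"]) simp
  ultimately show ?thesis
    using that by blast
qed

lemma fuzzy_Union_singleton [simp]: "fuzzy_Union {A} = A"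
  by (simp add: fuzzy_Union_def)

lemma base_in_generated_fuzzy_topology:
  "A \<in> B \<Longrightarrow> A \<in> generated_fuzzy_topology B"
  unfolding generated_fuzzy_topology_def by (auto intro!: exI[of _ "{A}"])

lemma fuzzy_empty_in_tau1: "fuzzy_empty \<in> tau1 f"
  by (simp add: tau1_def generated_fuzzy_topology_def)

lemma fuzzy_whole_in_tau1: "fuzzy_whole \<in> tau1 f"
proof -
  have "fuzzy_whole = tau1_base_set f 1"
    by (simp add: tau1_base_set_def fuzzy_whole_def fun_eq_iff)
  also have "\<dots> \<in> tau1 f"
    unfolding tau1_def by (rule base_in_generated_fuzzy_topology) blast
  finally show ?thesis .
qed

lemma tau1_open_cases:
  assumes "U \<in> tau1 f"
  shows "U = fuzzy_empty \<or> (\<exists>b. 0 < b \<and> b \<le> 1 \<and> U = periodic_step f b)"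
proof (cases "U = fuzzy_empty")
  case False
  then obtain F where F: "F \<subseteq> {tau1_base_set f n | n. n \<ge> 1}" "U = fuzzy_Union F"
    using assms unfolding tau1_def generated_fuzzy_topology_def by blast
  define N where "N = {n. n \<ge> 1 \<and> tau1_base_set f n \<in> F}"
  have F_eq: "F = tau1_base_set f ` N"
    using F(1) unfolding N_def by blast
  have "N \<noteq> {}"
    using False F(2) F_eq by (auto simp: fuzzy_Union_def fuzzy_empty_def)
  then obtain n0 where n0: "n0 \<in> N" by blast
  have N_pos: "n \<ge> 1" if "n \<in> N" for n
    using that by (simp add: N_def)
  have inverse_le_1: "1 / real n \<le> 1" if "n \<in> N" for n
    using N_pos[OF that] by simp
  define b where "b = (SUP n\<in>N. 1 / real n)"
  have bdd: "bdd_above ((\<lambda>n. 1 / real n) ` N)"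
    by (rule bdd_aboveI2[where M = 1]) (rule inverse_le_1)
  have "0 < 1 / real n0"
    using N_pos[OF n0] by simp
  also have "\<dots> \<le> b"
    unfolding b_def using bdd n0 by (rule cSUP_upper2) simp
  finally have "0 < b" .
  moreover have "b \<le> 1"
    unfolding b_def using \<open>N \<noteq> {}\<close> by (rule cSUP_least) (rule inverse_le_1)
  moreover have "U = periodic_step f b"
  proof
    fix x
    have "U x = (SUP n\<in>N. tau1_base_set f n x)"
      using \<open>N \<noteq> {}\<close> by (simp add: F(2) F_eq fuzzy_Union_def image_image)
    also have "\<dots> = periodic_step f b x"
      using \<open>N \<noteq> {}\<close> by (simp add: tau1_base_set_def periodic_step_def b_def)
    finally show "U x = periodic_step f b x" .
  qed
  ultimately show ?thesis by blast
qed simp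

lemma fuzzy_image_empty [simp]: "fuzzy_image f fuzzy_empty = fuzzy_empty"
proof
  fix y
  show "fuzzy_image f fuzzy_empty y = fuzzy_empty y"
  proof (cases "y \<in> range f")
    case True
    then have "fuzzy_empty ` (f -` {y}) = {0}"
      by (auto simp: fuzzy_empty_def)
    then show ?thesis
      by (simp add: fuzzy_image_def fuzzy_empty_def)
  qed (simp add: fuzzy_image_def fuzzy_empty_def)
qed

lemma fuzzy_image_whole: "fuzzy_image f fuzzy_whole = (\<lambda>y. if y \<in> range f then 1 else 0)"
proof
  fix y
  show "fuzzy_image f fuzzy_whole y = (if y \<in> range f then 1 else 0)"
  proof (cases "y \<in> range f")
    case True
    then have "fuzzy_whole ` (f -` {y}) = {1}"
      by (auto simp: fuzzy_whole_def)
    then show ?thesis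
      using True by (simp add: fuzzy_image_def)
  qed (simp add: fuzzy_image_def)
qed

lemma fuzzy_image_periodic_step:
  assumes "surj f" and "b \<le> 1"
  shows "fuzzy_image f (periodic_step f b) = periodic_step f b"
proof
  fix y
  let ?values = "periodic_step f b ` (f -` {y})"
  have "fuzzy_image f (periodic_step f b) y = Sup ?values"
    using assms(1) by (simp add: fuzzy_image_def)
  also have "\<dots> = periodic_step f b y"
  proof (cases "is_periodic f y")
    case True
    then obtain z where "is_periodic f z" "f z = y"
      by (rule is_periodic_has_periodic_preimage)
    then have "1 \<in> ?values"
      by (force simp: periodic_step_def)
    moreover have "v \<le> 1" if "v \<in> ?values" for v
      using that assms(2) by (auto simp: periodic_step_def)
    ultimately have "Sup ?values = 1"
      by (rule cSup_eq_maximum)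
    also have "\<dots> = periodic_step f b y"
      using True by (simp add: periodic_step_def)
    finally show ?thesis .
  next
    case False
    then have "\<not> is_periodic f x" if "f x = y" for x
      using that is_periodic_apply[of f x] by auto
    moreover have "f -` {y} \<noteq> {}"
      using assms(1) by (metis surjD vimage_singleton_eq empty_iff)
    ultimately have "?values = {b}"
      by (auto simp: periodic_step_def)
    then have "Sup ?values = b"
      by simp
    also have "\<dots> = periodic_step f b y"
      using False by (simp add: periodic_step_def)
    finally show ?thesis .
  qed
  finally show "fuzzy_image f (periodic_step f b) y = periodic_step f b y" .
qed

theorem theorem2p7:
  fixes f :: "'a \<Rightarrow> 'a"
  shows "surj f \<longleftrightarrow> fuzzy_open_map (tau1 f) (tau1 f) f"
proof
  assume "surj f"
  show "fuzzy_open_map (tau1 f) (tau1 f) f"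
    unfolding fuzzy_open_map_def
  proof
    fix U assume "U \<in> tau1 f"
    then consider "U = fuzzy_empty" | b where "b \<le> 1" "U = periodic_step f b"
      using tau1_open_cases by blast
    then show "fuzzy_image f U \<in> tau1 f"
    proof cases
      case 1
      then show ?thesis by (simp add: fuzzy_empty_in_tau1)
    next
      case 2
      then show ?thesis
        using \<open>U \<in> tau1 f\<close> fuzzy_image_periodic_step[OF \<open>surj f\<close>] by simp
    qed
  qed
next
  assume "fuzzy_open_map (tau1 f) (tau1 f) f"
  then have image_open: "fuzzy_image f fuzzy_whole \<in> tau1 f"
    using fuzzy_whole_in_tau1 unfolding fuzzy_open_map_def by blast
  have "fuzzy_image f fuzzy_whole (f undefined) = 1"
    by (simp add: fuzzy_image_whole)
  then have "fuzzy_image f fuzzy_whole \<noteq> fuzzy_empty"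
    by (auto simp: fuzzy_empty_def)
  then obtain b where "0 < b" "fuzzy_image f fuzzy_whole = periodic_step f b"
    using tau1_open_cases[OF image_open] by blast
  then have image_pos: "(if y \<in> range f then 1 else 0) > (0::real)" for y
    by (simp add: fuzzy_image_whole periodic_step_def fun_eq_iff)
  have "y \<in> range f" for y
    using image_pos[of y] by (simp split: if_splits)
  then show "surj f" by blast
qed

end
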